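(* Let $\mu$ be a partition of $n$ and let $x_2^{\alpha_2}\cdots x_n^{\alpha_n}\in\mathcal{A}(\mu)$ be a monomial of degree $r$. Run the following procedure: set $\rho^{(n)}=\mu$; for $i=n,n-1,\dots,2$, impose the dimension-ordering on the current composition $\rho^{(i)}$, place the number $i$ in the box with dimension-order label $\alpha_i+1$, and delete that box to obtain a composition $\rho^{(i-1)}$ of $i-1$; finally place $1$ in the one remaining box, and let $T$ be the resulting filling of $\mu$ (all placed numbers restored). Then at every step the box with label $\alpha_i+1$ exists, $T$ is a row-strict filling of $\mu$ with exactly $r$ dimension pairs, and $\Phi(T)=x_2^{\alpha_2}\cdots x_n^{\alpha_n}$. Consequently, setting $\Psi(x^\alpha):=T$ defines a degree-preserving map $\Psi$ from $\mathcal{A}(\mu)$ to row-strict fillings of $\mu$ with $\Phi\circ\Psi=\mathrm{id}_{\mathcal{A}(\mu)}$.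
   Context: A composition $\rho$ of $n$ is a sequence of nonnegative integers summing to $n$, drawn with $\rho_k$ left-justified boxes in row $k$ (rows top to bottom, columns left to right); a partition is a weakly decreasing composition with positive parts. A filling places $1,\dots,n$ bijectively in the boxes; row-strict means entries increase left to right in each row. Dimension-ordering of a composition with $r$ nonzero rows: the far-right boxes of the nonzero rows are labelled $1,\dots,r$ in the order obtained by sorting them by column from rightmost column to leftmost, and within a column from top to bottom. Dimension pairs (with $h(j)=j$): $(a,b)$ is a dimension pair of a filling $T$ if (1) $b>a$; (2) $b$ lies in the same column as $a$ strictly below it, or in a column strictly left of $a$'s; (3) if a box immediately right of $a$ exists, containing $c$, then $b\le c$. $D^T_j$ is the set of dimension pairs $(a,j)$; $\Phi(T)=\prod_{j=2}^n x_j^{|D^T_j|}$. $\mathcal{A}(\mu)=\{\Phi(T): T \text{ a row-strict filling of }\mu\}$. *)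

theory Defs
  imports Main "HOL-Library.Product_Lexorder"
begin

text \<open>Compositions are lists of row lengths (row 0 is the top row). Boxes are
  pairs (row, column), both 0-indexed, columns left to right.\<close>

definition boxes :: "nat list \<Rightarrow> (nat \<times> nat) set" where
  "boxes \<rho> = {(k, c). k < length \<rho> \<and> c < \<rho> ! k}"

definition is_partition :: "nat list \<Rightarrow> nat \<Rightarrow> bool" where
  "is_partition \<mu> n \<longleftrightarrow> sorted (rev \<mu>) \<and> (\<forall>p \<in> set \<mu>. 0 < p) \<and> sum_list \<mu> = n"

definition is_filling :: "nat list \<Rightarrow> (nat \<times> nat \<Rightarrow> nat) \<Rightarrow> bool" where
  "is_filling \<rho> T \<longleftrightarrow> bij_betw T (boxes \<rho>) {1..sum_list \<rho>}"

definition row_strict_filling :: "nat list \<Rightarrow> (nat \<times> nat \<Rightarrow> nat) \<Rightarrow> bool" where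
  "row_strict_filling \<rho> T \<longleftrightarrow> is_filling \<rho> T \<and>
     (\<forall>k c. (k, Suc c) \<in> boxes \<rho> \<longrightarrow> T (k, c) < T (k, Suc c))"

text \<open>Dimension pair (a,b) of T (with h(j) = j).\<close>
definition dim_pair :: "nat list \<Rightarrow> (nat \<times> nat \<Rightarrow> nat) \<Rightarrow> nat \<Rightarrow> nat \<Rightarrow> bool" where
  "dim_pair \<rho> T a b \<longleftrightarrow> (\<exists>pa \<in> boxes \<rho>. \<exists>pb \<in> boxes \<rho>. T pa = a \<and> T pb = b \<and>
     b > a \<and>
     ((snd pb = snd pa \<and> fst pb > fst pa) \<or> snd pb < snd pa) \<and>
     ((fst pa, Suc (snd pa)) \<in> boxes \<rho> \<longrightarrow> b \<le> T (fst pa, Suc (snd pa))))"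

definition dim_pairs :: "nat list \<Rightarrow> (nat \<times> nat \<Rightarrow> nat) \<Rightarrow> (nat \<times> nat) set" where
  "dim_pairs \<rho> T = {(a, b). dim_pair \<rho> T a b}"

definition D_set :: "nat list \<Rightarrow> (nat \<times> nat \<Rightarrow> nat) \<Rightarrow> nat \<Rightarrow> nat set" where
  "D_set \<rho> T j = {a. dim_pair \<rho> T a j}"

text \<open>Monomials x_2^a_2 ... x_n^a_n are represented by their exponent function
  (zero outside 2..n).  Phi(T).\<close>
definition Phi :: "nat list \<Rightarrow> (nat \<times> nat \<Rightarrow> nat) \<Rightarrow> (nat \<Rightarrow> nat)" where
  "Phi \<rho> T = (\<lambda>j. if 2 \<le> j \<and> j \<le> sum_list \<rho> then card (D_set \<rho> T j) else 0)"

definition A_set :: "nat list \<Rightarrow> (nat \<Rightarrow> nat) set" where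
  "A_set \<mu> = {Phi \<mu> T | T. row_strict_filling \<mu> T}"

definition mon_degree :: "nat \<Rightarrow> (nat \<Rightarrow> nat) \<Rightarrow> nat" where
  "mon_degree n \<alpha> = (\<Sum>j = 2..n. \<alpha> j)"

text \<open>Dimension ordering: the far-right boxes of the nonzero rows, sorted by column
  from rightmost to leftmost, then by row top to bottom.  Label l corresponds to
  list index l - 1.\<close>
definition end_boxes :: "nat list \<Rightarrow> (nat \<times> nat) list" where
  "end_boxes \<rho> = [(k, \<rho> ! k - 1). k \<leftarrow> [0..<length \<rho>], 0 < \<rho> ! k]"

definition dim_order :: "nat list \<Rightarrow> (nat \<times> nat) list" where
  "dim_order \<rho> = sort_key (\<lambda>(k, c). (- int c, k)) (end_boxes \<rho>)"

definition sel_box :: "(nat \<Rightarrow> nat) \<Rightarrow> nat \<Rightarrow> nat list \<Rightarrow> nat \<times> nat" where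
  "sel_box \<alpha> i \<rho> = dim_order \<rho> ! (\<alpha> i)"

definition del_step :: "(nat \<Rightarrow> nat) \<Rightarrow> nat \<Rightarrow> nat list \<Rightarrow> nat list" where
  "del_step \<alpha> i \<rho> = (let b = sel_box \<alpha> i \<rho> in \<rho>[fst b := \<rho> ! fst b - 1])"

text \<open>descend alpha i rho k: starting from rho = rho^(i), the composition after k deletion
  steps, i.e. rho^(i-k).\<close>
fun descend :: "(nat \<Rightarrow> nat) \<Rightarrow> nat \<Rightarrow> nat list \<Rightarrow> nat \<Rightarrow> nat list" where
  "descend \<alpha> i \<rho> 0 = \<rho>"
| "descend \<alpha> i \<rho> (Suc k) = descend \<alpha> (i - 1) (del_step \<alpha> i \<rho>) k"

fun proc :: "(nat \<Rightarrow> nat) \<Rightarrow> nat \<Rightarrow> nat list \<Rightarrow> (nat \<times> nat \<Rightarrow> nat)" where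
  "proc \<alpha> 0 \<rho> = (\<lambda>_. 0)"
| "proc \<alpha> (Suc 0) \<rho> = (\<lambda>b. if b \<in> boxes \<rho> then 1 else 0)"
| "proc \<alpha> (Suc (Suc m)) \<rho> =
     (proc \<alpha> (Suc m) (del_step \<alpha> (Suc (Suc m)) \<rho>))(sel_box \<alpha> (Suc (Suc m)) \<rho> := Suc (Suc m))"

end

theory Submission
  imports Defs
begin

(* A monomial alpha in A(mu) is Phi(T) for some row-strict filling T of mu.
   In such a filling the largest entry i = |rho| sits at the far right of its row, i.e. in
   an end box p, and the dimension pairs (a, i) are exactly the entries a of the end boxes
   preceding p in the dimension ordering.  Hence alpha_i = |D_i| is the index of p in the
   dimension ordering: the procedure selects exactly the box of T holding i.  Deleting that
   box leaves a row-strict filling of a composition of i - 1 with unchanged sets D_j (j < i),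
   so by induction along the recursion of proc the procedure reconstructs T itself, and all
   selected labels exist.  Since Phi, the dimension pairs and row-strictness only depend on
   the values inside the boxes, proc alpha n mu inherits them from T; finally the number of
   dimension pairs of any filling is the degree of its monomial Phi. *)

section \<open>Position of an end box in the dimension ordering\<close>

definition dkey :: "nat \<times> nat \<Rightarrow> int \<times> nat" where
  "dkey = (\<lambda>(k, c). (- int c, k))"

lemma dim_order_dkey: "dim_order \<rho> = sort_key dkey (end_boxes \<rho>)"
  by (simp add: dim_order_def dkey_def)

lemma inj_dkey: "inj dkey"
  by (auto simp: inj_def dkey_def)

lemma set_end_boxes:
  "set (end_boxes \<rho>) = {(k, \<rho> ! k - 1) | k. k < length \<rho> \<and> 0 < \<rho> ! k}"
  by (auto simp: end_boxes_def)

lemma distinct_end_boxes: "distinct (end_boxes \<rho>)"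
proof -
  have "concat (map (\<lambda>k. if P k then [f k] else []) xs) = map f (filter P xs)"
    for P and f :: "nat \<Rightarrow> nat \<times> nat" and xs :: "nat list"
    by (induction xs) auto
  hence "end_boxes \<rho> = map (\<lambda>k. (k, \<rho> ! k - 1)) (filter (\<lambda>k. 0 < \<rho> ! k) [0..<length \<rho>])"
    unfolding end_boxes_def .
  thus ?thesis by (simp add: distinct_map inj_on_def)
qed

lemma sorted_index:
  fixes f :: "'a \<Rightarrow> 'b::linorder"
  assumes "sorted (map f L)" "distinct (map f L)" "p \<in> set L"
  shows "card {x \<in> set L. f x < f p} < length L \<and> L ! card {x \<in> set L. f x < f p} = p"
  using assms
proof (induction L)
  case Nil thus ?case by simp
next
  case (Cons y L)
  show ?case
  proof (cases "y = p")
    case True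
    have none_smaller: "{x \<in> set (y # L). f x < f p} = {}"
      using Cons.prems True by (auto simp: less_le_not_le)
    show ?thesis unfolding none_smaller using True by simp
  next
    case False
    hence pL: "p \<in> set L" using Cons.prems by auto
    have "f y < f p" using Cons.prems pL by (auto simp: order_le_less)
    hence "{x \<in> set (y # L). f x < f p} = insert y {x \<in> set L. f x < f p}" by auto
    moreover have "y \<notin> set L" using Cons.prems by auto
    ultimately have "card {x \<in> set (y # L). f x < f p} = Suc (card {x \<in> set L. f x < f p})"
      by simp
    thus ?thesis using Cons pL by auto
  qed
qed

lemma dim_order_index:
  assumes "p \<in> set (end_boxes \<rho>)"
  defines "m \<equiv> card {x \<in> set (end_boxes \<rho>). dkey x < dkey p}"
  shows "m < length (dim_order \<rho>) \<and> dim_order \<rho> ! m = p"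
proof -
  have "distinct (map dkey (sort_key dkey (end_boxes \<rho>)))"
    using distinct_end_boxes by (simp add: distinct_map inj_on_subset[OF inj_dkey])
  from sorted_index[OF sorted_sort_key this, of p] show ?thesis
    using assms by (simp add: dim_order_dkey)
qed

section \<open>The largest entry of a row-strict filling\<close>

lemma row_strict_bij:
  "row_strict_filling \<rho> T \<Longrightarrow> bij_betw T (boxes \<rho>) {1..sum_list \<rho>}"
  by (simp add: row_strict_filling_def is_filling_def)

lemma largest_entry_end_box:
  assumes rs: "row_strict_filling \<rho> T" and i: "sum_list \<rho> = i" "1 \<le> i"
  obtains k where "k < length \<rho>" "0 < \<rho> ! k" "T (k, \<rho> ! k - 1) = i"
proof -
  have bij: "bij_betw T (boxes \<rho>) {1..i}" using row_strict_bij[OF rs] i by simp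
  hence "i \<in> T ` boxes \<rho>" using i by (simp add: bij_betw_def)
  then obtain k c where kc: "(k, c) \<in> boxes \<rho>" "T (k, c) = i" by auto
  hence kl: "k < length \<rho>" "c < \<rho> ! k" by (auto simp: boxes_def)
  have "\<not> Suc c < \<rho> ! k"
  proof
    assume "Suc c < \<rho> ! k"
    hence b: "(k, Suc c) \<in> boxes \<rho>" using kl by (simp add: boxes_def)
    hence "T (k, c) < T (k, Suc c)" using rs by (simp add: row_strict_filling_def)
    moreover have "T (k, Suc c) \<in> {1..i}" using b bij by (auto simp: bij_betw_def)
    ultimately show False using kc by simp
  qed
  hence "c = \<rho> ! k - 1" using kl by simp
  thus ?thesis using that kl kc by simp
qed

lemma dim_pair_largest_iff:
  assumes rs: "row_strict_filling \<rho> T" and i: "sum_list \<rho> = i"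
    and k: "k < length \<rho>" "0 < \<rho> ! k" "T (k, \<rho> ! k - 1) = i"
  defines "p \<equiv> (k, \<rho> ! k - 1)"
  shows "dim_pair \<rho> T a i \<longleftrightarrow> (\<exists>x \<in> set (end_boxes \<rho>). dkey x < dkey p \<and> T x = a)"
proof -
  have bij: "bij_betw T (boxes \<rho>) {1..i}" using row_strict_bij[OF rs] i by simp
  hence inj: "inj_on T (boxes \<rho>)" and img: "T ` boxes \<rho> = {1..i}" by (auto simp: bij_betw_def)
  have pB: "p \<in> boxes \<rho>" and Tp: "T p = i" using k by (auto simp: boxes_def p_def)
  have only_p: "q = p" if "q \<in> boxes \<rho>" "T q = i" for q
    using inj that pB Tp by (auto simp: inj_on_def)
  show ?thesis
  proof
    assume "dim_pair \<rho> T a i"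
    then obtain k' c' pb where pa: "(k', c') \<in> boxes \<rho>" and pb: "pb \<in> boxes \<rho>" and
      Ta: "T (k', c') = a" and Tb: "T pb = i" and
      pos: "(snd pb = c' \<and> fst pb > k') \<or> snd pb < c'" and
      next_box: "(k', Suc c') \<in> boxes \<rho> \<longrightarrow> i \<le> T (k', Suc c')"
      by (auto simp: dim_pair_def)
    have "pb = p" using only_p pb Tb .
    have "(k', Suc c') \<notin> boxes \<rho>"
    proof
      assume r: "(k', Suc c') \<in> boxes \<rho>"
      hence "T (k', Suc c') \<in> {1..i}" using img by blast
      hence "T (k', Suc c') = i" using next_box r by simp
      hence "(k', Suc c') = p" using only_p r by blast
      thus False using pos \<open>pb = p\<close> by (auto simp: p_def)
    qed
    hence "(k', c') \<in> set (end_boxes \<rho>)" using pa by (auto simp: set_end_boxes boxes_def)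
    moreover have "dkey (k', c') < dkey p" using pos \<open>pb = p\<close> by (auto simp: dkey_def p_def)
    ultimately show "\<exists>x \<in> set (end_boxes \<rho>). dkey x < dkey p \<and> T x = a" using Ta by blast
  next
    assume "\<exists>x \<in> set (end_boxes \<rho>). dkey x < dkey p \<and> T x = a"
    then obtain k' where x: "k' < length \<rho>" "0 < \<rho> ! k'" "T (k', \<rho> ! k' - 1) = a"
      and dk: "dkey (k', \<rho> ! k' - 1) < dkey p" by (auto simp: set_end_boxes)
    define q where "q = (k', \<rho> ! k' - 1)"
    have qB: "q \<in> boxes \<rho>" using x by (auto simp: boxes_def q_def)
    hence "a \<in> {1..i}" "a \<noteq> i" using x img only_p dk by (auto simp: q_def)
    moreover have "(snd p = snd q \<and> fst p > fst q) \<or> snd p < snd q"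
      using dk by (auto simp: dkey_def p_def q_def)
    moreover have "(fst q, Suc (snd q)) \<notin> boxes \<rho>" using x by (auto simp: boxes_def q_def)
    moreover have "T q = a" using x(3) by (simp add: q_def)
    ultimately show "dim_pair \<rho> T a i" unfolding dim_pair_def
      using qB pB Tp by (metis atLeastAtMost_iff nat_less_le)
  qed
qed

lemma card_D_set_largest:
  assumes rs: "row_strict_filling \<rho> T" and i: "sum_list \<rho> = i"
    and k: "k < length \<rho>" "0 < \<rho> ! k" "T (k, \<rho> ! k - 1) = i"
  shows "card (D_set \<rho> T i) = card {x \<in> set (end_boxes \<rho>). dkey x < dkey (k, \<rho> ! k - 1)}"
proof -
  define E where "E = {x \<in> set (end_boxes \<rho>). dkey x < dkey (k, \<rho> ! k - 1)}"
  have "D_set \<rho> T i = T ` E"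
    using dim_pair_largest_iff[OF assms] by (auto simp: D_set_def E_def)
  moreover have "E \<subseteq> boxes \<rho>" by (auto simp: E_def set_end_boxes boxes_def)
  hence "inj_on T E" using row_strict_bij[OF rs] by (auto simp: bij_betw_def inj_on_subset)
  ultimately show ?thesis by (simp add: card_image E_def)
qed

lemma sel_box_largest:
  assumes rs: "row_strict_filling \<rho> T" and i: "sum_list \<rho> = i"
    and k: "k < length \<rho>" "0 < \<rho> ! k" "T (k, \<rho> ! k - 1) = i"
    and \<alpha>: "\<alpha> i = card (D_set \<rho> T i)"
  shows "\<alpha> i < length (dim_order \<rho>) \<and> sel_box \<alpha> i \<rho> = (k, \<rho> ! k - 1)"
proof -
  have "(k, \<rho> ! k - 1) \<in> set (end_boxes \<rho>)" using k by (auto simp: set_end_boxes)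
  thus ?thesis
    using dim_order_index card_D_set_largest[OF rs i k] \<alpha> by (simp add: sel_box_def)
qed

section \<open>Deleting the box of the largest entry\<close>

definition shrink_row :: "nat list \<Rightarrow> nat \<Rightarrow> nat list" where
  "shrink_row \<rho> k = \<rho>[k := \<rho> ! k - 1]"

lemma boxes_shrink_row:
  "k < length \<rho> \<Longrightarrow> boxes (shrink_row \<rho> k) = boxes \<rho> - {(k, \<rho> ! k - 1)}"
  by (auto simp: boxes_def shrink_row_def nth_list_update split: if_splits)

lemma sum_list_shrink_row:
  "k < length \<rho> \<Longrightarrow> 0 < \<rho> ! k \<Longrightarrow> sum_list (shrink_row \<rho> k) = sum_list \<rho> - 1"
  by (simp add: shrink_row_def sum_list_update)

lemma row_strict_shrink_row:
  assumes rs: "row_strict_filling \<rho> T" and i: "sum_list \<rho> = i"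
    and k: "k < length \<rho>" "0 < \<rho> ! k" "T (k, \<rho> ! k - 1) = i"
  shows "row_strict_filling (shrink_row \<rho> k) T"
proof -
  define p where "p = (k, \<rho> ! k - 1)"
  have pB: "p \<in> boxes \<rho>" using k by (auto simp: boxes_def p_def)
  have bij: "bij_betw T (boxes \<rho>) {1..i}" using row_strict_bij[OF rs] i by simp
  hence "bij_betw T (boxes \<rho> - {p}) ({1..i} - {i})"
    using pB k by (intro bij_betw_DiffI) (auto simp: bij_betw_def p_def)
  moreover have "{1..i} - {i} = {1..sum_list (shrink_row \<rho> k)}"
    using sum_list_shrink_row[OF k(1,2)] i by auto
  ultimately show ?thesis
    using rs boxes_shrink_row[OF k(1)]
    by (auto simp: row_strict_filling_def is_filling_def p_def)
qed

lemma dim_pair_shrink_row: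
  assumes rs: "row_strict_filling \<rho> T" and i: "sum_list \<rho> = i"
    and k: "k < length \<rho>" "0 < \<rho> ! k" "T (k, \<rho> ! k - 1) = i" and j: "j < i"
  shows "dim_pair (shrink_row \<rho> k) T a j \<longleftrightarrow> dim_pair \<rho> T a j"
proof -
  define p where "p = (k, \<rho> ! k - 1)"
  have B': "boxes (shrink_row \<rho> k) = boxes \<rho> - {p}"
    using boxes_shrink_row[OF k(1)] by (simp add: p_def)
  have Tp: "T p = i" using k by (simp add: p_def)
  show ?thesis
  proof
    assume "dim_pair (shrink_row \<rho> k) T a j"
    then obtain pa pb where pa: "pa \<in> boxes \<rho>" and pb: "pb \<in> boxes \<rho>" and
        vals: "T pa = a" "T pb = j" "a < j" and
        pos: "(snd pb = snd pa \<and> fst pb > fst pa) \<or> snd pb < snd pa" and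
        next_box: "(fst pa, Suc (snd pa)) \<in> boxes \<rho> - {p} \<longrightarrow> j \<le> T (fst pa, Suc (snd pa))"
      unfolding dim_pair_def B' by blast
    text \<open>The box right of a may be p only in rho, where j \<le> T p holds anyway.\<close>
    have "(fst pa, Suc (snd pa)) \<in> boxes \<rho> \<longrightarrow> j \<le> T (fst pa, Suc (snd pa))"
      using next_box Tp j by (cases "(fst pa, Suc (snd pa)) = p") auto
    thus "dim_pair \<rho> T a j" unfolding dim_pair_def using pa pb vals pos by blast
  next
    assume "dim_pair \<rho> T a j"
    then obtain pa pb where pa: "pa \<in> boxes \<rho>" and pb: "pb \<in> boxes \<rho>" and
        vals: "T pa = a" "T pb = j" "a < j" and
        pos: "(snd pb = snd pa \<and> fst pb > fst pa) \<or> snd pb < snd pa" and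
        next_box: "(fst pa, Suc (snd pa)) \<in> boxes \<rho> \<longrightarrow> j \<le> T (fst pa, Suc (snd pa))"
      unfolding dim_pair_def by blast
    text \<open>The boxes holding a and j are not p, since their entries are below i.\<close>
    have "pa \<in> boxes \<rho> - {p}" "pb \<in> boxes \<rho> - {p}" using pa pb vals Tp j by auto
    thus "dim_pair (shrink_row \<rho> k) T a j"
      unfolding dim_pair_def B' using vals pos next_box by blast
  qed
qed

lemma D_set_shrink_row:
  assumes "row_strict_filling \<rho> T" "sum_list \<rho> = i"
    "k < length \<rho>" "0 < \<rho> ! k" "T (k, \<rho> ! k - 1) = i" "j < i"
  shows "D_set (shrink_row \<rho> k) T j = D_set \<rho> T j"
  using dim_pair_shrink_row[OF assms] by (simp add: D_set_def)

section \<open>The procedure reconstructs the filling\<close>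

lemma descend_labels_step:
  assumes "\<alpha> i < length (dim_order \<rho>)"
    and "\<forall>j \<in> {2..i - 1}. \<alpha> j < length (dim_order (descend \<alpha> (i - 1) (del_step \<alpha> i \<rho>) (i - 1 - j)))"
  shows "\<forall>j \<in> {2..i}. \<alpha> j < length (dim_order (descend \<alpha> i \<rho> (i - j)))"
proof
  fix j assume j: "j \<in> {2..i}"
  show "\<alpha> j < length (dim_order (descend \<alpha> i \<rho> (i - j)))"
  proof (cases "j = i")
    case True thus ?thesis using assms(1) by simp
  next
    case False
    hence "i - j = Suc (i - 1 - j)" and "i = Suc (i - 1)" using j by auto
    hence "descend \<alpha> i \<rho> (i - j) = descend \<alpha> (i - 1) (del_step \<alpha> i \<rho>) (i - 1 - j)"
      by (metis descend.simps(2))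
    thus ?thesis using assms(2) j False by auto
  qed
qed

theorem proc_reconstructs:
  assumes "row_strict_filling \<rho> T" "sum_list \<rho> = i"
    and "\<forall>j \<in> {2..i}. \<alpha> j = card (D_set \<rho> T j)"
  shows "(\<forall>b \<in> boxes \<rho>. proc \<alpha> i \<rho> b = T b) \<and>
         (\<forall>j \<in> {2..i}. \<alpha> j < length (dim_order (descend \<alpha> i \<rho> (i - j))))"
  using assms
proof (induction \<alpha> i \<rho> arbitrary: T rule: proc.induct)
  case (1 \<alpha> \<rho>)
  hence "boxes \<rho> = {}" using row_strict_bij by (fastforce simp: bij_betw_def)
  thus ?case by simp
next
  case (2 \<alpha> \<rho>)
  hence "\<forall>b \<in> boxes \<rho>. T b = 1" using row_strict_bij by (fastforce simp: bij_betw_def)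
  thus ?case by simp
next
  case (3 \<alpha> m \<rho>)
  define i where "i = Suc (Suc m)"
  have rs: "row_strict_filling \<rho> T" and si: "sum_list \<rho> = i" using 3 by (simp_all add: i_def)
  obtain k where k: "k < length \<rho>" "0 < \<rho> ! k" "T (k, \<rho> ! k - 1) = i"
    using largest_entry_end_box[OF rs si] by (auto simp: i_def)
  define p where "p = (k, \<rho> ! k - 1)"
  have sel: "\<alpha> i < length (dim_order \<rho>)" "sel_box \<alpha> i \<rho> = p"
    using sel_box_largest[OF rs si k] 3(4) by (auto simp: i_def p_def)
  hence del: "del_step \<alpha> i \<rho> = shrink_row \<rho> k"
    by (simp add: del_step_def shrink_row_def p_def)
  have IH: "(\<forall>b \<in> boxes (shrink_row \<rho> k). proc \<alpha> (i - 1) (shrink_row \<rho> k) b = T b) \<and>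
     (\<forall>j \<in> {2..i - 1}. \<alpha> j < length (dim_order (descend \<alpha> (i - 1) (shrink_row \<rho> k) (i - 1 - j))))"
    using 3(1)[of T] del row_strict_shrink_row[OF rs si k] sum_list_shrink_row[OF k(1,2)] si
      D_set_shrink_row[OF rs si k] 3(4) by (simp add: i_def)
  have "proc \<alpha> i \<rho> = (proc \<alpha> (i - 1) (shrink_row \<rho> k))(p := i)"
    using sel del by (simp add: i_def)
  hence "\<forall>b \<in> boxes \<rho>. proc \<alpha> i \<rho> b = T b"
    using IH boxes_shrink_row[OF k(1)] k by (auto simp: p_def)
  moreover have "\<forall>j \<in> {2..i}. \<alpha> j < length (dim_order (descend \<alpha> i \<rho> (i - j)))"
    using descend_labels_step[of \<alpha> i \<rho>] sel(1) IH del by simp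
  ultimately show ?case unfolding i_def by blast
qed

section \<open>Invariance and the degree of Phi\<close>

lemma filling_cong:
  assumes agree: "\<forall>b \<in> boxes \<rho>. T' b = T b"
  shows "row_strict_filling \<rho> T' = row_strict_filling \<rho> T"
    and "dim_pair \<rho> T' = dim_pair \<rho> T"
proof -
  have "bij_betw T' (boxes \<rho>) X = bij_betw T (boxes \<rho>) X" for X
    using agree by (intro bij_betw_cong) simp
  moreover have "(k, c) \<in> boxes \<rho>" if "(k, Suc c) \<in> boxes \<rho>" for k c
    using that by (auto simp: boxes_def)
  ultimately show "row_strict_filling \<rho> T' = row_strict_filling \<rho> T"
    using agree unfolding row_strict_filling_def is_filling_def by metis
  show "dim_pair \<rho> T' = dim_pair \<rho> T"
  proof (intro ext)
    fix a b
    show "dim_pair \<rho> T' a b = dim_pair \<rho> T a b"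
      unfolding dim_pair_def
    proof (intro bex_cong refl)
      fix pa pb assume "pa \<in> boxes \<rho>" "pb \<in> boxes \<rho>"
      moreover have "(fst pa, Suc (snd pa)) \<in> boxes \<rho> \<Longrightarrow>
          T' (fst pa, Suc (snd pa)) = T (fst pa, Suc (snd pa))" using agree by blast
      ultimately show "(T' pa = a \<and> T' pb = b \<and> b > a \<and>
         ((snd pb = snd pa \<and> fst pb > fst pa) \<or> snd pb < snd pa) \<and>
         ((fst pa, Suc (snd pa)) \<in> boxes \<rho> \<longrightarrow> b \<le> T' (fst pa, Suc (snd pa)))) =
         (T pa = a \<and> T pb = b \<and> b > a \<and>
         ((snd pb = snd pa \<and> fst pb > fst pa) \<or> snd pb < snd pa) \<and>
         ((fst pa, Suc (snd pa)) \<in> boxes \<rho> \<longrightarrow> b \<le> T (fst pa, Suc (snd pa))))"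
        using agree by auto
    qed
  qed
qed

lemma card_dim_pairs:
  assumes "is_filling \<rho> T"
  shows "card (dim_pairs \<rho> T) = mon_degree (sum_list \<rho>) (Phi \<rho> T)"
proof -
  define n where "n = sum_list \<rho>"
  have img: "T ` boxes \<rho> = {1..n}" using assms by (simp add: is_filling_def bij_betw_def n_def)
  have upper_entry: "b \<in> {2..n}" if pair: "dim_pair \<rho> T a b" for a b
  proof -
    obtain pa pb where "pa \<in> boxes \<rho>" "pb \<in> boxes \<rho>" "T pa = a" "T pb = b" "a < b"
      using pair unfolding dim_pair_def by blast
    hence "a \<in> {1..n}" "b \<in> {1..n}" "a < b" using img by auto
    thus ?thesis by simp
  qed
  have "prod.swap ` dim_pairs \<rho> T = Sigma {2..n} (D_set \<rho> T)"
  proof (rule set_eqI)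
    fix x :: "nat \<times> nat"
    obtain b a where x: "x = (b, a)" by (cases x)
    have "x \<in> prod.swap ` dim_pairs \<rho> T \<longleftrightarrow> dim_pair \<rho> T a b"
      unfolding x dim_pairs_def by simp
    thus "x \<in> prod.swap ` dim_pairs \<rho> T \<longleftrightarrow> x \<in> Sigma {2..n} (D_set \<rho> T)"
      using upper_entry x by (auto simp: D_set_def)
  qed
  moreover have "card (dim_pairs \<rho> T) = card (prod.swap ` dim_pairs \<rho> T)"
    by (rule card_image[symmetric]) simp
  ultimately have "card (dim_pairs \<rho> T) = card (Sigma {2..n} (D_set \<rho> T))" by simp
  also have "\<dots> = (\<Sum>b = 2..n. card (D_set \<rho> T b))"
  proof (rule card_SigmaI)
    have "D_set \<rho> T b \<subseteq> {..<b}" for b unfolding D_set_def dim_pair_def by blast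
    thus "\<forall>b \<in> {2..n}. finite (D_set \<rho> T b)" using finite_subset by blast
  qed simp
  also have "\<dots> = mon_degree n (Phi \<rho> T)"
    unfolding mon_degree_def Phi_def by (intro sum.cong) (auto simp: n_def)
  finally show ?thesis unfolding n_def .
qed

theorem mainTheorem5:
  fixes \<mu> :: "nat list" and n r :: nat and \<alpha> :: "nat \<Rightarrow> nat"
  assumes "is_partition \<mu> n"
    and "\<alpha> \<in> A_set \<mu>"
    and "mon_degree n \<alpha> = r"
  shows "(\<forall>i \<in> {2..n}. \<alpha> i < length (dim_order (descend \<alpha> n \<mu> (n - i))))
    \<and> row_strict_filling \<mu> (proc \<alpha> n \<mu>)
    \<and> card (dim_pairs \<mu> (proc \<alpha> n \<mu>)) = r
    \<and> Phi \<mu> (proc \<alpha> n \<mu>) = \<alpha>"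
proof -
  obtain T where rs: "row_strict_filling \<mu> T" and \<alpha>: "\<alpha> = Phi \<mu> T"
    using assms(2) by (auto simp: A_set_def)
  have n: "sum_list \<mu> = n" using assms(1) by (simp add: is_partition_def)
  have "\<forall>j \<in> {2..n}. \<alpha> j = card (D_set \<mu> T j)" using \<alpha> n by (simp add: Phi_def)
  note reconstruct = proc_reconstructs[OF rs n this]
  define T' where "T' = proc \<alpha> n \<mu>"
  have agree: "\<forall>b \<in> boxes \<mu>. T' b = T b" using reconstruct by (simp add: T'_def)
  have same_pairs: "dim_pair \<mu> T' = dim_pair \<mu> T" using filling_cong(2)[OF agree] .
  have "row_strict_filling \<mu> T'" using filling_cong(1)[OF agree] rs by blast
  moreover have "Phi \<mu> T' = \<alpha>" unfolding \<alpha> Phi_def D_set_def same_pairs ..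
  moreover have "card (dim_pairs \<mu> T') = r"
  proof -
    have "card (dim_pairs \<mu> T') = card (dim_pairs \<mu> T)" unfolding dim_pairs_def same_pairs ..
    also have "\<dots> = mon_degree n \<alpha>"
      using card_dim_pairs rs n \<alpha> unfolding row_strict_filling_def by simp
    finally show ?thesis using assms(3) by simp
  qed
  ultimately show ?thesis using reconstruct by (simp add: T'_def)
qed

end
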